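(* Let $n\ge1$ and let $d_1,\dots,d_n$ be positive real numbers. Let $\mathbf{d}_n=\operatorname{diag}(d_1,\dots,d_n)$, let $\mathbf{L}_n$ be the $n\times n$ lower triangular matrix all of whose entries on and below the diagonal equal $1$, and let $$\mathbf{M}(\mathbf{d}_n)=\mathbf{L}_n\mathbf{d}_n+\mathbf{d}_n\mathbf{L}_n^{\mathrm{T}}-\mathbf{d}_n.$$ Then the real symmetric matrix $\mathbf{M}(\mathbf{d}_n)$ is positive definite if and only if $d_1<d_2<\dots<d_n$. *)

theory Defs
  imports "Jordan_Normal_Form.Matrix"
begin

definition lower_ones :: "nat \<Rightarrow> real mat" where
  "lower_ones n = mat n n (\<lambda>(i, j). if j \<le> i then 1 else 0)"

text \<open>Diagonal matrix diag(d_1,...,d_n), with d_{i+1} stored at index i.\<close>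
definition diag_mat :: "nat \<Rightarrow> (nat \<Rightarrow> real) \<Rightarrow> real mat" where
  "diag_mat n d = mat n n (\<lambda>(i, j). if i = j then d i else 0)"

definition M_mat :: "nat \<Rightarrow> (nat \<Rightarrow> real) \<Rightarrow> real mat" where
  "M_mat n d = lower_ones n * diag_mat n d + diag_mat n d * transpose_mat (lower_ones n) - diag_mat n d"

definition pos_definite :: "real mat \<Rightarrow> bool" where
  "pos_definite A \<longleftrightarrow> A \<in> carrier_mat (dim_row A) (dim_row A) \<and> A = transpose_mat A \<and>
     (\<forall>x \<in> carrier_vec (dim_row A). x \<noteq> 0\<^sub>v (dim_row A) \<longrightarrow> x \<bullet> (A *\<^sub>v x) > 0)"

end

theory Submission
  imports Defs
begin

text \<open>
  The entries of \<open>M(d)\<close> are \<open>M\<^sub>i\<^sub>j = d (min i j)\<close>. Writing \<open>d\<^sub>m\<close> as the sum of the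
  increments \<open>\<delta>\<^sub>l = d\<^sub>l - d\<^sub>l\<^sub>-\<^sub>1\<close> (with \<open>d\<^sub>-\<^sub>1 = 0\<close>) for \<open>l \<le> m\<close> turns the quadratic form into
  \<open>x\<^sup>T M x = \<Sum>\<^sub>l \<delta>\<^sub>l s\<^sub>l\<^sup>2\<close>, where \<open>s\<^sub>l = x\<^sub>l + \<dots> + x\<^sub>n\<^sub>-\<^sub>1\<close> are the tail sums of \<open>x\<close>.
  Since \<open>x \<mapsto> s\<close> is invertible, \<open>M(d)\<close> is positive definite iff every \<open>\<delta>\<^sub>l\<close> is positive,
  and as \<open>\<delta>\<^sub>0 = d\<^sub>0 > 0\<close> this says exactly that \<open>d\<close> is strictly increasing.
\<close>

definition backward_diff :: "(nat \<Rightarrow> real) \<Rightarrow> nat \<Rightarrow> real" where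
  "backward_diff d l = d l - (if l = 0 then 0 else d (l - 1))"

definition tail_sum :: "real vec \<Rightarrow> nat \<Rightarrow> real" where
  "tail_sum x l = (\<Sum>i\<in>{l..<dim_vec x}. x $ i)"

lemma sum_backward_diff_atMost: "(\<Sum>l\<le>m. backward_diff d l) = d m"
  by (induction m) (auto simp: backward_diff_def)

lemma M_mat_eq_min: "M_mat n d = mat n n (\<lambda>(i, j). d (min i j))"
proof (rule eq_matI)
  fix i j assume "i < dim_row (mat n n (\<lambda>(i, j). d (min i j)))"
    and "j < dim_col (mat n n (\<lambda>(i, j). d (min i j)))"
  then have i: "i < n" and j: "j < n" by auto
  have "(lower_ones n * diag_mat n d) $$ (i, j) = (\<Sum>k<n. if k = j \<and> j \<le> i then d j else 0)"
    using i j by (auto simp: lower_ones_def diag_mat_def scalar_prod_def lessThan_atLeast0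
        intro!: sum.cong)
  also have "\<dots> = (if j \<le> i then d j else 0)"
    using j by (simp add: sum.delta')
  finally have lower: "(lower_ones n * diag_mat n d) $$ (i, j) = (if j \<le> i then d j else 0)" .
  have "(diag_mat n d * transpose_mat (lower_ones n)) $$ (i, j) = (\<Sum>k<n. if k = i \<and> i \<le> j then d i else 0)"
    using i j by (auto simp: lower_ones_def diag_mat_def scalar_prod_def lessThan_atLeast0
        intro!: sum.cong)
  also have "\<dots> = (if i \<le> j then d i else 0)"
    using i by (simp add: sum.delta')
  finally have upper: "(diag_mat n d * transpose_mat (lower_ones n)) $$ (i, j) = (if i \<le> j then d i else 0)" .
  show "M_mat n d $$ (i, j) = mat n n (\<lambda>(i, j). d (min i j)) $$ (i, j)"
    using i j lower upper by (auto simp: M_mat_def diag_mat_def lower_ones_def min_def)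
qed (auto simp: M_mat_def lower_ones_def diag_mat_def)

lemma sum_min_quadratic_form:
  fixes d x :: "nat \<Rightarrow> real"
  shows "(\<Sum>i<n. x i * (\<Sum>j<n. d (min i j) * x j))
       = (\<Sum>l<n. backward_diff d l * (\<Sum>i\<in>{l..<n}. x i)\<^sup>2)"
proof -
  have min_eq: "d (min i j) = (\<Sum>l<n. if l \<le> i \<and> l \<le> j then backward_diff d l else 0)"
    if "i < n" "j < n" for i j
  proof -
    have "(\<Sum>l<n. if l \<le> i \<and> l \<le> j then backward_diff d l else 0)
        = sum (backward_diff d) ({..<n} \<inter> {l. l \<le> i \<and> l \<le> j})"
      by (simp add: sum.inter_restrict)
    also have "\<dots> = sum (backward_diff d) {..min i j}"
      using that by (intro sum.cong) auto
    finally show ?thesis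
      by (simp add: sum_backward_diff_atMost)
  qed
  have tail: "(\<Sum>i<n. if l \<le> i then x i else 0) = (\<Sum>i\<in>{l..<n}. x i)" for l
  proof -
    have "(\<Sum>i<n. if l \<le> i then x i else 0) = sum x ({..<n} \<inter> {i. l \<le> i})"
      by (simp add: sum.inter_restrict)
    also have "\<dots> = sum x {l..<n}"
      by (intro sum.cong) auto
    finally show ?thesis .
  qed
  define c where "c l i j = (if l \<le> i \<and> l \<le> j then backward_diff d l else 0) * x i * x j"
    for l i j
  have "(\<Sum>i<n. x i * (\<Sum>j<n. d (min i j) * x j)) = (\<Sum>i<n. \<Sum>j<n. \<Sum>l<n. c l i j)"
    unfolding c_def sum_distrib_left sum_distrib_right[symmetric]
    by (intro sum.cong refl) (simp add: min_eq mult_ac)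
  also have "\<dots> = (\<Sum>i<n. \<Sum>l<n. \<Sum>j<n. c l i j)"
    by (rule sum.cong[OF refl]) (rule sum.swap)
  also have "\<dots> = (\<Sum>l<n. \<Sum>i<n. \<Sum>j<n. c l i j)"
    by (rule sum.swap)
  also have "\<dots> = (\<Sum>l<n. backward_diff d l *
      ((\<Sum>i<n. if l \<le> i then x i else 0) * (\<Sum>j<n. if l \<le> j then x j else 0)))"
  proof (rule sum.cong[OF refl])
    fix l
    have "c l i j = backward_diff d l * ((if l \<le> i then x i else 0) * (if l \<le> j then x j else 0))"
      for i j by (simp add: c_def)
    then show "(\<Sum>i<n. \<Sum>j<n. c l i j) = backward_diff d l *
        ((\<Sum>i<n. if l \<le> i then x i else 0) * (\<Sum>j<n. if l \<le> j then x j else 0))"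
      unfolding sum_product by (simp add: sum_distrib_left)
  qed
  finally show ?thesis
    by (simp add: tail power2_eq_square)
qed

lemma M_mat_quadratic_form:
  assumes "x \<in> carrier_vec n"
  shows "x \<bullet> (M_mat n d *\<^sub>v x) = (\<Sum>l<n. backward_diff d l * (tail_sum x l)\<^sup>2)"
proof -
  have "x \<bullet> (M_mat n d *\<^sub>v x) = (\<Sum>i<n. x $ i * (\<Sum>j<n. d (min i j) * x $ j))"
    using assms by (simp add: M_mat_eq_min scalar_prod_def lessThan_atLeast0 mult_ac)
  then show ?thesis
    using assms by (simp add: sum_min_quadratic_form tail_sum_def)
qed

lemma vec_nth_eq_tail_sum_diff:
  assumes "i < dim_vec x"
  shows "x $ i = tail_sum x i - tail_sum x (Suc i)"
  using assms by (simp add: tail_sum_def sum.atLeast_Suc_lessThan)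

lemma ex_tail_sum_nonzero:
  assumes x: "x \<in> carrier_vec n" and "x \<noteq> 0\<^sub>v n"
  shows "\<exists>l<n. tail_sum x l \<noteq> 0"
proof (rule ccontr)
  assume "\<not> ?thesis"
  then have zero: "tail_sum x l = 0" if "l \<le> n" for l
    using that x by (cases "l = n") (auto simp: tail_sum_def)
  have "x $ i = 0" if "i < n" for i
    using vec_nth_eq_tail_sum_diff[of i x] zero[of i] zero[of "Suc i"] that x by simp
  then have "x = 0\<^sub>v n"
    using x by (intro eq_vecI) auto
  with \<open>x \<noteq> 0\<^sub>v n\<close> show False ..
qed

lemma tail_sum_vec_diff:
  assumes "m \<le> n"
  shows "tail_sum (vec n (\<lambda>i. s i - s (Suc i))) m = s m - s n"
proof -
  have "(\<Sum>i = m..<n. s i - s (Suc i)) = - (\<Sum>i = m..<n. s (Suc i) - s i)"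
    by (simp add: sum_negf[symmetric])
  then show ?thesis
    using assms by (simp add: tail_sum_def sum_Suc_diff')
qed

lemma pos_definite_M_mat_iff: "pos_definite (M_mat n d) \<longleftrightarrow> (\<forall>l<n. 0 < backward_diff d l)"
proof
  assume pd: "pos_definite (M_mat n d)"
  show "\<forall>l<n. 0 < backward_diff d l"
  proof (intro allI impI)
    fix l assume "l < n"
    \<comment> \<open>\<open>x = e\<^sub>l - e\<^sub>l\<^sub>-\<^sub>1\<close>, the vector whose only nonzero tail sum is \<open>s\<^sub>l = 1\<close>\<close>
    define s :: "nat \<Rightarrow> real" where "s m = (if m = l then 1 else 0)" for m
    define x where "x = vec n (\<lambda>i. s i - s (Suc i))"
    have x: "x \<in> carrier_vec n" by (simp add: x_def)
    have "s n = 0"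
      using \<open>l < n\<close> by (simp add: s_def)
    then have tail_x: "tail_sum x m = s m" if "m \<le> n" for m
      by (simp add: x_def tail_sum_vec_diff[OF that])
    have "x \<noteq> 0\<^sub>v n"
      using tail_x[of l] \<open>l < n\<close> by (auto simp: s_def tail_sum_def)
    then have "0 < x \<bullet> (M_mat n d *\<^sub>v x)"
      using pd x by (simp add: pos_definite_def M_mat_eq_min)
    also have "\<dots> = (\<Sum>m<n. backward_diff d m * (s m)\<^sup>2)"
      using tail_x by (simp add: M_mat_quadratic_form[OF x])
    also have "\<dots> = (\<Sum>m<n. if m = l then backward_diff d m else 0)"
      by (intro sum.cong) (auto simp: s_def)
    also have "\<dots> = backward_diff d l"
      using \<open>l < n\<close> by simp
    finally show "0 < backward_diff d l" .
  qed
next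
  assume pos: "\<forall>l<n. 0 < backward_diff d l"
  have "0 < x \<bullet> (M_mat n d *\<^sub>v x)" if x: "x \<in> carrier_vec n" and "x \<noteq> 0\<^sub>v n" for x
  proof -
    obtain l where l: "l < n" "tail_sum x l \<noteq> 0"
      using ex_tail_sum_nonzero[OF x \<open>x \<noteq> 0\<^sub>v n\<close>] by blast
    have "0 < (\<Sum>m<n. backward_diff d m * (tail_sum x m)\<^sup>2)"
      using l pos by (intro sum_pos2[of _ l]) (auto intro: mult_nonneg_nonneg)
    then show ?thesis
      by (simp add: M_mat_quadratic_form[OF x])
  qed
  then show "pos_definite (M_mat n d)"
    by (auto simp: pos_definite_def M_mat_eq_min min.commute intro!: eq_matI)
qed

lemma backward_diff_pos_iff_strict_mono:
  assumes "0 < d 0"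
  shows "(\<forall>l<n. 0 < backward_diff d l) \<longleftrightarrow> (\<forall>i j. i < j \<and> j < n \<longrightarrow> d i < d j)"
proof
  assume pos: "\<forall>l<n. 0 < backward_diff d l"
  have step: "d m < d (Suc m)" if "m \<in> {m. Suc m < n}" for m
    using pos that by (auto simp: backward_diff_def)
  show "\<forall>i j. i < j \<and> j < n \<longrightarrow> d i < d j"
  proof (intro allI impI)
    fix i j assume ij: "i < j \<and> j < n"
    then have "{i..<j} \<subseteq> {m. Suc m < n}"
      by auto
    with ij step show "d i < d j"
      using lift_Suc_mono_less_ivl by blast
  qed
next
  assume mono: "\<forall>i j. i < j \<and> j < n \<longrightarrow> d i < d j"
  show "\<forall>l<n. 0 < backward_diff d l"
  proof (intro allI impI)
    fix l assume "l < n"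
    then show "0 < backward_diff d l"
      using assms mono by (cases l) (auto simp: backward_diff_def)
  qed
qed

theorem lemma6:
  fixes n :: nat and d :: "nat \<Rightarrow> real"
  assumes "n \<ge> 1"
    and "\<And>i. i < n \<Longrightarrow> d i > 0"
  shows "pos_definite (M_mat n d) \<longleftrightarrow> (\<forall>i j. i < j \<and> j < n \<longrightarrow> d i < d j)"
  using assms by (simp add: pos_definite_M_mat_iff backward_diff_pos_iff_strict_mono)

end
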